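(* Let $\mathcal S$ be a finite fundamental system and $G$ the elementary group generated by the elements of $\mathcal S$. Then $G$ is solvable, and its derived length is at most the cardinality of $\mathcal S$.
   Context: A homeomorphism $f$ of $[0,1]$ is simple if $[0,1]\setminus\mathrm{Fix}(f)$ has exactly one connected component; its closure is the support $S_f$ of $f$. It is positive if $f(x)\ge x$ for all $x$. A fundamental domain of a simple $f$ is a segment $[x,f(x)]$ with $x$ in the interior of $S_f$. A fundamental system is a family $\mathcal S$ of triples $(f,S_f,I_f)$ such that each $f$ is a simple positive homeomorphism of $[0,1]$, $S_f$ is its support and $I_f\subset S_f$ is a fundamental domain of $f$, and for any two distinct triples in $\mathcal S$: either $S_f$ and $S_g$ have disjoint interiors, or $S_f\subset I_g$, or $S_g\subset I_f$. An elementary group is a group generated by the elements $f$ of a fundamental system. The derived length of a solvable group $G$ is the least $k$ with $G_k=\{1\}$, where $G_1=[G,G]$ and $G_{j+1}=[G_j,G_j]$. *)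

theory Defs
  imports "HOL-Analysis.Analysis" "HOL-Algebra.Solvable_Groups" "HOL-Algebra.Bij"
begin

definition homeo01 :: "(real \<Rightarrow> real) \<Rightarrow> bool" where
  "homeo01 f \<longleftrightarrow> (\<exists>g. homeomorphism {0..1} {0..1} f g)"

definition Fix01 :: "(real \<Rightarrow> real) \<Rightarrow> real set" where
  "Fix01 f = {x \<in> {0..1}. f x = x}"

definition simple_homeo :: "(real \<Rightarrow> real) \<Rightarrow> bool" where
  "simple_homeo f \<longleftrightarrow> homeo01 f \<and> card (components ({0..1} - Fix01 f)) = 1"

definition supp01 :: "(real \<Rightarrow> real) \<Rightarrow> real set" where
  "supp01 f = closure ({0..1} - Fix01 f)"

definition positive_homeo :: "(real \<Rightarrow> real) \<Rightarrow> bool" where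
  "positive_homeo f \<longleftrightarrow> (\<forall>x\<in>{0..1}. x \<le> f x)"

definition fundamental_domain :: "(real \<Rightarrow> real) \<Rightarrow> real set \<Rightarrow> bool" where
  "fundamental_domain f I \<longleftrightarrow> (\<exists>x \<in> interior (supp01 f). I = {x .. f x})"

text \<open>A fundamental system: a set of pairs (f, I_f); the support S_f is determined by f.\<close>

definition fundamental_system :: "((real \<Rightarrow> real) \<times> real set) set \<Rightarrow> bool" where
  "fundamental_system \<S> \<longleftrightarrow>
     (\<forall>(f, I) \<in> \<S>. simple_homeo f \<and> positive_homeo f \<and> fundamental_domain f I) \<and>
     (\<forall>(f, I) \<in> \<S>. \<forall>(g, J) \<in> \<S>. (f, I) \<noteq> (g, J) \<longrightarrow>
        interior (supp01 f) \<inter> interior (supp01 g) = {} \<or> supp01 f \<subseteq> J \<or> supp01 g \<subseteq> I)"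

definition elementary_group :: "((real \<Rightarrow> real) \<times> real set) set \<Rightarrow> (real \<Rightarrow> real) monoid" where
  "elementary_group \<S> =
     (BijGroup {0..1}) \<lparr> carrier := generate (BijGroup {0..1}) ((\<lambda>(f, I). restrict f {0..1}) ` \<S>) \<rparr>"

end

theory Submission
  imports Defs
begin

text \<open>
  Choose an element \<open>g\<close> of the system whose support is maximal, so that it lies in no other
  fundamental domain. Every other element either has its support inside the fundamental domain
  \<open>I\<^sub>g\<close>, or its support has interior disjoint from that of \<open>g\<close>. Let \<open>B\<close> be generated by the
  former and \<open>A\<close> by the latter. Then \<open>A\<close> commutes with \<open>g\<close>, and the conjugates
  \<open>g\<^sup>n B g\<^sup>-\<^sup>n\<close> are supported in the translates of the interior of \<open>I\<^sub>g\<close> under \<open>g\<^sup>n\<close>, which are pairwise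
  disjoint because \<open>g\<close> moves points upwards; so \<open>A\<close> and all these conjugates commute pairwise.
  The derived subgroup of \<open>\<langle>g, A, B\<rangle>\<close> lies in the subgroup generated by \<open>A\<close> and the conjugates,
  and the \<open>k\<close>-th derived subgroup of a group generated by pairwise commuting subgroups is generated
  by their \<open>k\<close>-th derived subgroups. Since \<open>A\<close> and \<open>B\<close> come from a smaller fundamental system,
  induction on its size bounds the derived length by the cardinality of the system.
\<close>

section \<open>Derived series of groups generated by commuting subgroups\<close>

definition conjugation :: "('a, 'b) monoid_scheme \<Rightarrow> 'a \<Rightarrow> 'a \<Rightarrow> 'a" where
  "conjugation G g x = g \<otimes>\<^bsub>G\<^esub> x \<otimes>\<^bsub>G\<^esub> inv\<^bsub>G\<^esub> g"

definition conjugates_family ::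
    "('a, 'b) monoid_scheme \<Rightarrow> 'a \<Rightarrow> 'a set \<Rightarrow> 'a set \<Rightarrow> int option \<Rightarrow> 'a set" where
  "conjugates_family G g A B i =
     (case i of None \<Rightarrow> A | Some n \<Rightarrow> conjugation G (g [^]\<^bsub>G\<^esub> n) ` B)"

context group begin

lemma inv_mult_cancel [simp]: "x \<in> carrier G \<Longrightarrow> y \<in> carrier G \<Longrightarrow> inv x \<otimes> (x \<otimes> y) = y"
  by (simp flip: m_assoc)

lemma mult_inv_cancel [simp]: "x \<in> carrier G \<Longrightarrow> y \<in> carrier G \<Longrightarrow> x \<otimes> (inv x \<otimes> y) = y"
  by (simp flip: m_assoc)

lemma conjugation_closed [intro, simp]:
  "g \<in> carrier G \<Longrightarrow> x \<in> carrier G \<Longrightarrow> conjugation G g x \<in> carrier G"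
  unfolding conjugation_def by simp

lemma group_hom_conjugation: "g \<in> carrier G \<Longrightarrow> group_hom G G (conjugation G g)"
  unfolding group_hom_def group_hom_axioms_def
  by (auto intro!: homI simp: is_group conjugation_def m_assoc inv_solve_left)

lemma conjugation_conjugation:
  "g \<in> carrier G \<Longrightarrow> h \<in> carrier G \<Longrightarrow> x \<in> carrier G \<Longrightarrow>
   conjugation G g (conjugation G h x) = conjugation G (g \<otimes> h) x"
  unfolding conjugation_def by (simp add: m_assoc inv_mult_group)

lemma conjugation_one [simp]: "x \<in> carrier G \<Longrightarrow> conjugation G \<one> x = x"
  unfolding conjugation_def by simp

lemma conjugation_of_commuting:
  "g \<in> carrier G \<Longrightarrow> x \<in> carrier G \<Longrightarrow> g \<otimes> x = x \<otimes> g \<Longrightarrow> conjugation G g x = x"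
  unfolding conjugation_def by (simp add: m_assoc)

lemma commutator_of_commuting:
  "g \<in> carrier G \<Longrightarrow> x \<in> carrier G \<Longrightarrow> g \<otimes> x = x \<otimes> g \<Longrightarrow> g \<otimes> x \<otimes> inv g \<otimes> inv x = \<one>"
  using conjugation_of_commuting unfolding conjugation_def by simp

lemma inv_commutator:
  "x \<in> carrier G \<Longrightarrow> y \<in> carrier G \<Longrightarrow> inv (x \<otimes> y \<otimes> inv x \<otimes> inv y) = y \<otimes> x \<otimes> inv y \<otimes> inv x"
  by (simp add: inv_mult_group m_assoc)

lemma conjugation_generate_subset:
  assumes "g \<in> carrier G" "Y \<subseteq> carrier G" "conjugation G g ` Y \<subseteq> generate G Y"
  shows "conjugation G g ` generate G Y \<subseteq> generate G Y"
  using group_hom.generate_img[OF group_hom_conjugation[OF assms(1)] assms(2)]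
    generate_subgroup_incl[OF assms(3) generate_is_subgroup[OF assms(2)]] by simp

lemma subgroup_normalizing:
  assumes "subgroup L G"
  shows "subgroup {g \<in> carrier G. conjugation G g ` L \<subseteq> L \<and> conjugation G (inv g) ` L \<subseteq> L} G"
proof -
  have L: "L \<subseteq> carrier G" using subgroup.subset[OF assms] .
  have comp: "conjugation G (g \<otimes> h) ` L \<subseteq> L"
    if "g \<in> carrier G" "h \<in> carrier G" "conjugation G g ` L \<subseteq> L" "conjugation G h ` L \<subseteq> L" for g h
  proof
    fix y assume "y \<in> conjugation G (g \<otimes> h) ` L"
    then obtain x where x: "x \<in> L" "y = conjugation G (g \<otimes> h) x" by blast
    then have "y = conjugation G g (conjugation G h x)" using that L conjugation_conjugation by auto
    then show "y \<in> L" using that x by blast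
  qed
  show ?thesis
  proof (rule subgroupI)
    show "{g \<in> carrier G. conjugation G g ` L \<subseteq> L \<and> conjugation G (inv g) ` L \<subseteq> L} \<noteq> {}"
      using L by (auto intro!: exI[of _ \<one>] simp: subset_iff)
  next
    fix g h assume "g \<in> {g \<in> carrier G. conjugation G g ` L \<subseteq> L \<and> conjugation G (inv g) ` L \<subseteq> L}"
      "h \<in> {g \<in> carrier G. conjugation G g ` L \<subseteq> L \<and> conjugation G (inv g) ` L \<subseteq> L}"
    then show "g \<otimes> h \<in> {g \<in> carrier G. conjugation G g ` L \<subseteq> L \<and> conjugation G (inv g) ` L \<subseteq> L}"
      using comp[of g h] comp[of "inv h" "inv g"] by (simp add: inv_mult_group)
  qed auto
qed

lemma derived_generate_subset:
  assumes X: "X \<subseteq> carrier G" and L: "subgroup L G"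
    and normalizes: "\<And>s. s \<in> X \<Longrightarrow> conjugation G s ` L \<subseteq> L \<and> conjugation G (inv s) ` L \<subseteq> L"
    and commutators: "\<And>a b. a \<in> X \<Longrightarrow> b \<in> X \<Longrightarrow> a \<otimes> b \<otimes> inv a \<otimes> inv b \<in> L"
  shows "derived G (generate G X) \<subseteq> L"
proof -
  let ?H = "generate G X"
  have H: "subgroup ?H G" using generate_is_subgroup[OF X] .
  have "?H \<subseteq> {g \<in> carrier G. conjugation G g ` L \<subseteq> L \<and> conjugation G (inv g) ` L \<subseteq> L}"
    by (rule generate_subgroup_incl[OF _ subgroup_normalizing[OF L]]) (use normalizes X in blast)
  then have HL: "conjugation G h l \<in> L" if "h \<in> ?H" "l \<in> L" for h l
    using that by blast
  have commutator_subgroup: "subgroup {y \<in> ?H. a \<otimes> y \<otimes> inv a \<otimes> inv y \<in> L} G" if a: "a \<in> carrier G" for a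
  proof (rule subgroupI)
    fix y y' assume y: "y \<in> {y \<in> ?H. a \<otimes> y \<otimes> inv a \<otimes> inv y \<in> L}"
      and y': "y' \<in> {y \<in> ?H. a \<otimes> y \<otimes> inv a \<otimes> inv y \<in> L}"
    have c: "y \<in> carrier G" "y' \<in> carrier G" using y y' subgroup.subset[OF H] by auto
    have "a \<otimes> (y \<otimes> y') \<otimes> inv a \<otimes> inv (y \<otimes> y') =
        (a \<otimes> y \<otimes> inv a \<otimes> inv y) \<otimes> conjugation G y (a \<otimes> y' \<otimes> inv a \<otimes> inv y')"
      using a c by (simp add: conjugation_def m_assoc inv_mult_group)
    then show "y \<otimes> y' \<in> {y \<in> ?H. a \<otimes> y \<otimes> inv a \<otimes> inv y \<in> L}"
      using y y' HL subgroup.m_closed[OF L] subgroup.m_closed[OF H] by auto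
    have "a \<otimes> inv y \<otimes> inv a \<otimes> inv (inv y) = conjugation G (inv y) (inv (a \<otimes> y \<otimes> inv a \<otimes> inv y))"
      using a c by (simp add: conjugation_def m_assoc inv_mult_group)
    then show "inv y \<in> {y \<in> ?H. a \<otimes> y \<otimes> inv a \<otimes> inv y \<in> L}"
      using y HL subgroup.m_inv_closed[OF L] subgroup.m_inv_closed[OF H] by auto
  qed (use subgroup.subset[OF H] subgroup.one_closed[OF H] subgroup.one_closed[OF L] a in auto)
  have left: "a \<otimes> y \<otimes> inv a \<otimes> inv y \<in> L" if a: "a \<in> X" and y: "y \<in> ?H" for a y
  proof -
    have "?H \<subseteq> {y \<in> ?H. a \<otimes> y \<otimes> inv a \<otimes> inv y \<in> L}"
      by (rule generate_subgroup_incl[OF _ commutator_subgroup])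
        (use a X commutators in \<open>auto intro: generate.incl\<close>)
    then show ?thesis using y by blast
  qed
  have "x \<otimes> y \<otimes> inv x \<otimes> inv y \<in> L" if x: "x \<in> ?H" and y: "y \<in> ?H" for x y
  proof -
    have yc: "y \<in> carrier G" using y subgroup.subset[OF H] by blast
    have "y \<otimes> a \<otimes> inv y \<otimes> inv a \<in> L" if a: "a \<in> X" for a
    proof -
      have "inv (a \<otimes> y \<otimes> inv a \<otimes> inv y) \<in> L"
        using left[OF a y] subgroup.m_inv_closed[OF L] by blast
      moreover have "a \<in> carrier G" using a X by blast
      ultimately show ?thesis using inv_commutator yc by simp
    qed
    note X_commutators = this
    have "?H \<subseteq> {x \<in> ?H. y \<otimes> x \<otimes> inv y \<otimes> inv x \<in> L}"
      by (rule generate_subgroup_incl[OF _ commutator_subgroup[OF yc]])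
        (use X_commutators in \<open>auto intro: generate.incl\<close>)
    then have "y \<otimes> x \<otimes> inv y \<otimes> inv x \<in> L" using x by blast
    then show ?thesis
      using inv_commutator[of y x] subgroup.m_inv_closed[OF L] x yc subgroup.subset[OF H] by force
  qed
  then show ?thesis
    unfolding derived_def by (intro generate_subgroup_incl[OF _ L]) blast
qed

lemma exp_of_derived_subset: "subgroup H G \<Longrightarrow> (derived G ^^ n) H \<subseteq> H"
  by (induction n) (use derived_incl exp_of_derived_is_subgroup in auto)

lemma exp_of_derived_consistent:
  assumes "subgroup H G" shows "(derived (G\<lparr>carrier := H\<rparr>) ^^ n) H = (derived G ^^ n) H"
proof (induction n)
  case (Suc n)
  then show ?case
    using derived_consistent[OF exp_of_derived_subset[OF assms] assms] by simp
qed simp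

lemma conjugation_derived:
  assumes "subgroup H G" "h \<in> H" "x \<in> derived G H"
  shows "conjugation G h x \<in> derived G H"
proof -
  interpret N: normal "derived G H" "G\<lparr>carrier := H\<rparr>"
    using derived_subgroup_is_normal[OF assms(1)] .
  show ?thesis
    using N.inv_op_closed2[of h x] assms m_inv_consistent[OF assms(1,2)]
    by (simp add: conjugation_def)
qed

lemma derived_generate_commuting_subgroups:
  assumes H: "\<And>i. subgroup (H i) G"
    and commute: "\<And>i j a b. i \<noteq> j \<Longrightarrow> a \<in> H i \<Longrightarrow> b \<in> H j \<Longrightarrow> a \<otimes> b = b \<otimes> a"
  shows "derived G (generate G (\<Union>i. H i)) \<subseteq> generate G (\<Union>i. derived G (H i))"
proof (rule derived_generate_subset)
  let ?Y = "\<Union>i. derived G (H i)"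
  have Hc: "H i \<subseteq> carrier G" for i using subgroup.subset[OF H] .
  have Y: "?Y \<subseteq> carrier G" using derived_in_carrier[OF Hc] by blast
  show "(\<Union>i. H i) \<subseteq> carrier G" using Hc by blast
  show "subgroup (generate G ?Y) G" using generate_is_subgroup[OF Y] .
  have conj_Y: "conjugation G s ` ?Y \<subseteq> generate G ?Y" if s: "s \<in> H i" for s i
  proof
    fix z assume "z \<in> conjugation G s ` ?Y"
    then obtain j y where y: "y \<in> derived G (H j)" "z = conjugation G s y" by blast
    have "z \<in> derived G (H j)"
    proof (cases "i = j")
      case True
      then show ?thesis using conjugation_derived H s y by blast
    next
      case False
      have "y \<in> H j" using y derived_incl[OF subset_refl H] by blast
      then have "conjugation G s y = y"
        using conjugation_of_commuting commute[OF False s] s Hc by blast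
      then show ?thesis using y by simp
    qed
    then show "z \<in> generate G ?Y" by (blast intro: generate.incl)
  qed
  show "conjugation G s ` generate G ?Y \<subseteq> generate G ?Y \<and>
        conjugation G (inv s) ` generate G ?Y \<subseteq> generate G ?Y" if s: "s \<in> (\<Union>i. H i)" for s
  proof -
    obtain i where si: "s \<in> H i" using s by blast
    then have "inv s \<in> H i" by (rule subgroup.m_inv_closed[OF H])
    then show ?thesis
      using conjugation_generate_subset[OF _ Y conj_Y] si Hc by blast
  qed
  show "a \<otimes> b \<otimes> inv a \<otimes> inv b \<in> generate G ?Y"
    if a: "a \<in> (\<Union>i. H i)" and b: "b \<in> (\<Union>i. H i)" for a b
  proof -
    obtain i j where ij: "a \<in> H i" "b \<in> H j" using a b by blast
    show ?thesis
    proof (cases "i = j")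
      case True
      then have "a \<otimes> b \<otimes> inv a \<otimes> inv b \<in> derived G (H i)"
        unfolding derived_def using ij by (blast intro: generate.incl)
      then show ?thesis by (blast intro: generate.incl)
    next
      case False
      have "a \<otimes> b \<otimes> inv a \<otimes> inv b = \<one>"
        using commutator_of_commuting[OF _ _ commute[OF False ij]] ij Hc by blast
      then show ?thesis using generate.one[of G ?Y] by simp
    qed
  qed
qed

lemma exp_of_derived_generate_commuting_subgroups:
  assumes H: "\<And>i. subgroup (H i) G"
    and commute: "\<And>i j a b. i \<noteq> j \<Longrightarrow> a \<in> H i \<Longrightarrow> b \<in> H j \<Longrightarrow> a \<otimes> b = b \<otimes> a"
  shows "(derived G ^^ n) (generate G (\<Union>i. H i)) \<subseteq> generate G (\<Union>i. (derived G ^^ n) (H i))"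
proof (induction n)
  case 0
  show ?case by simp
next
  case (Suc n)
  have "(derived G ^^ Suc n) (generate G (\<Union>i. H i)) \<subseteq> derived G (generate G (\<Union>i. (derived G ^^ n) (H i)))"
    using mono_derived[OF Suc.IH] by simp
  also have "\<dots> \<subseteq> generate G (\<Union>i. (derived G ^^ Suc n) (H i))"
  proof -
    have "a \<otimes> b = b \<otimes> a"
      if "i \<noteq> j" "a \<in> (derived G ^^ n) (H i)" "b \<in> (derived G ^^ n) (H j)" for i j a b
      using that commute exp_of_derived_subset[OF H] by blast
    then have "derived G (generate G (\<Union>i. (derived G ^^ n) (H i)))
        \<subseteq> generate G (\<Union>i. derived G ((derived G ^^ n) (H i)))"
      by (rule derived_generate_commuting_subgroups[OF exp_of_derived_is_subgroup[OF H]])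
    then show ?thesis by simp
  qed
  finally show ?case .
qed

lemma derived_generate_insert_subset:
  assumes N: "subgroup N G" and g: "g \<in> carrier G" and X: "X \<subseteq> N"
    and conj_N: "conjugation G g ` N \<subseteq> N" "conjugation G (inv g) ` N \<subseteq> N"
  shows "derived G (generate G (insert g X)) \<subseteq> N"
proof (rule derived_generate_subset[OF _ N])
  have Nc: "N \<subseteq> carrier G" using subgroup.subset[OF N] .
  show "insert g X \<subseteq> carrier G" using g X Nc by blast
  have conj_in: "conjugation G s x \<in> N" if "s \<in> N" "x \<in> N" for s x
    using that subgroup.m_closed[OF N] subgroup.m_inv_closed[OF N] by (simp add: conjugation_def)
  show "conjugation G s ` N \<subseteq> N \<and> conjugation G (inv s) ` N \<subseteq> N" if "s \<in> insert g X" for s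
    using that conj_N conj_in X subgroup.m_inv_closed[OF N] by blast
  have gx: "g \<otimes> x \<otimes> inv g \<otimes> inv x \<in> N" if "x \<in> X" for x
    using that X conj_N(1) subgroup.m_closed[OF N] subgroup.m_inv_closed[OF N]
    unfolding conjugation_def by blast
  show "a \<otimes> b \<otimes> inv a \<otimes> inv b \<in> N" if a: "a \<in> insert g X" and b: "b \<in> insert g X" for a b
  proof -
    consider "a = g" "b = g" | "a = g" "b \<in> X" | "a \<in> X" "b = g" | "a \<in> X" "b \<in> X"
      using a b by blast
    then show ?thesis
    proof cases
      case 1
      then show ?thesis using commutator_of_commuting[OF g g] subgroup.one_closed[OF N] by simp
    next
      case 2
      then show ?thesis using gx by simp
    next
      case 3
      then have "a \<in> carrier G" using X Nc by blast
      moreover have "inv (g \<otimes> a \<otimes> inv g \<otimes> inv a) \<in> N"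
        using gx[OF 3(1)] subgroup.m_inv_closed[OF N] by blast
      ultimately show ?thesis using inv_commutator[OF g] 3(2) by simp
    next
      case 4
      then have "a \<in> N" "b \<in> N" using X by auto
      then show ?thesis by (intro subgroup.m_closed[OF N] subgroup.m_inv_closed[OF N])
    qed
  qed
qed

lemma derived_generate_insert_subset_conjugates:
  assumes g: "g \<in> carrier G" and Ac: "A \<subseteq> carrier G" and Bc: "B \<subseteq> carrier G"
    and central: "\<And>a n. a \<in> A \<Longrightarrow> g [^] (n::int) \<otimes> a = a \<otimes> g [^] n"
  shows "derived G (generate G (insert g (A \<union> B)))
    \<subseteq> generate G (\<Union> (range (conjugates_family G g A B)))"
proof -
  let ?H = "conjugates_family G g A B"
  have Hc: "\<Union> (range ?H) \<subseteq> carrier G"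
    using Ac Bc g by (auto simp: conjugates_family_def subset_iff split: option.splits)
  have shift: "conjugation G (g [^] m) ` ?H i \<subseteq> \<Union> (range ?H)" for m :: int and i
  proof (cases i)
    case None
    have "conjugation G (g [^] m) a = a" if "a \<in> A" for a
      using conjugation_of_commuting central that g Ac by blast
    then have "conjugation G (g [^] m) ` ?H i \<subseteq> ?H None" using None by (auto simp: conjugates_family_def)
    then show ?thesis by blast
  next
    case (Some n)
    have "conjugation G (g [^] m) (conjugation G (g [^] n) b) \<in> ?H (Some (m + n))" if "b \<in> B" for b
      using that g Bc by (auto simp: conjugates_family_def conjugation_conjugation int_pow_mult)
    then have "conjugation G (g [^] m) ` ?H i \<subseteq> ?H (Some (m + n))"
      using Some by (auto simp del: conjugates_family_def simp: conjugates_family_def[of G g A B "Some n"])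
    then show ?thesis by blast
  qed
  have incl: "\<Union> (range ?H) \<subseteq> generate G (\<Union> (range ?H))"
    by (rule subsetI) (rule generate.incl)
  have "B \<subseteq> ?H (Some 0)"
  proof
    fix b assume b: "b \<in> B"
    have "b \<in> conjugation G \<one> ` B"
      by (rule rev_image_eqI[OF b]) (use b Bc in auto)
    then show "b \<in> ?H (Some 0)" by (simp add: conjugates_family_def)
  qed
  moreover have "A \<subseteq> ?H None" by (simp add: conjugates_family_def)
  ultimately have "A \<union> B \<subseteq> \<Union> (range ?H)" by blast
  then have AB: "A \<union> B \<subseteq> generate G (\<Union> (range ?H))" using incl by (rule subset_trans)
  have "conjugation G (g [^] m) ` \<Union> (range ?H) \<subseteq> generate G (\<Union> (range ?H))" for m :: int
  proof -
    have "conjugation G (g [^] m) ` \<Union> (range ?H) \<subseteq> \<Union> (range ?H)"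
      unfolding image_UN by (rule UN_least) (rule shift)
    then show ?thesis using incl by (rule subset_trans)
  qed
  from this[of 1] this[of "-1"] have
    "conjugation G g ` generate G (\<Union> (range ?H)) \<subseteq> generate G (\<Union> (range ?H))"
    "conjugation G (inv g) ` generate G (\<Union> (range ?H)) \<subseteq> generate G (\<Union> (range ?H))"
    using conjugation_generate_subset[OF g Hc] conjugation_generate_subset[OF inv_closed[OF g] Hc] g
    by (simp_all add: int_pow_neg)
  then show ?thesis
    using derived_generate_insert_subset[OF generate_is_subgroup[OF Hc] g AB] by blast
qed

lemma exp_of_derived_generate_insert:
  assumes g: "g \<in> carrier G" and A: "subgroup A G" and B: "subgroup B G"
    and central: "\<And>a n. a \<in> A \<Longrightarrow> g [^] (n::int) \<otimes> a = a \<otimes> g [^] n"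
    and commute_AB: "\<And>a b n. a \<in> A \<Longrightarrow> b \<in> B \<Longrightarrow>
      a \<otimes> conjugation G (g [^] (n::int)) b = conjugation G (g [^] n) b \<otimes> a"
    and commute_BB: "\<And>b b' n m. n \<noteq> m \<Longrightarrow> b \<in> B \<Longrightarrow> b' \<in> B \<Longrightarrow>
      conjugation G (g [^] (n::int)) b \<otimes> conjugation G (g [^] m) b'
        = conjugation G (g [^] m) b' \<otimes> conjugation G (g [^] n) b"
    and A_k: "(derived G ^^ k) A \<subseteq> {\<one>}" and B_k: "(derived G ^^ k) B \<subseteq> {\<one>}"
  shows "(derived G ^^ Suc k) (generate G (insert g (A \<union> B))) \<subseteq> {\<one>}"
proof -
  let ?H = "conjugates_family G g A B"
  have Ac: "A \<subseteq> carrier G" and Bc: "B \<subseteq> carrier G" using A B subgroup.subset by auto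
  have H: "subgroup (?H i) G" for i
    using A group_hom.subgroup_img_is_subgroup[OF group_hom_conjugation B] g
    by (auto simp: conjugates_family_def split: option.splits)
  have commute: "a \<otimes> b = b \<otimes> a" if "i \<noteq> j" "a \<in> ?H i" "b \<in> ?H j" for i j a b
    using that commute_AB commute_BB by (cases i; cases j) (auto simp: conjugates_family_def)
  have H_k: "(derived G ^^ k) (?H i) \<subseteq> {\<one>}" for i
  proof (cases i)
    case (Some n)
    have "(derived G ^^ k) (?H i) = conjugation G (g [^] n) ` (derived G ^^ k) B"
      using group_hom.exp_of_derived_img[OF group_hom_conjugation Bc] g Some
      by (simp add: conjugates_family_def)
    then show ?thesis using B_k g by (auto simp: conjugation_def)
  qed (use A_k in \<open>simp add: conjugates_family_def\<close>)
  have "(derived G ^^ Suc k) (generate G (insert g (A \<union> B)))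
      = (derived G ^^ k) (derived G (generate G (insert g (A \<union> B))))"
    by (simp add: funpow_swap1)
  also have "\<dots> \<subseteq> (derived G ^^ k) (generate G (\<Union> (range ?H)))"
    by (rule mono_exp_of_derived[OF derived_generate_insert_subset_conjugates[OF g Ac Bc central]])
  also have "\<dots> \<subseteq> generate G (\<Union>i. (derived G ^^ k) (?H i))"
    by (rule exp_of_derived_generate_commuting_subgroups[OF H commute])
  also have "\<dots> \<subseteq> generate G {\<one>}"
    using H_k by (intro mono_generate) blast
  finally show ?thesis by (simp add: generate_one)
qed
end

section \<open>Supports of bijections\<close>

interpretation Bij: group "BijGroup S" for S
  by (rule group_BijGroup)

text \<open>Elements of \<open>BijGroup S\<close> are undefined outside \<open>S\<close>, so moved points are only sought in \<open>S\<close>.\<close>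

definition moved :: "'a set \<Rightarrow> ('a \<Rightarrow> 'a) \<Rightarrow> 'a set" where
  "moved S u = {x \<in> S. u x \<noteq> x}"

lemma BijGroup_mult_apply:
  "u \<in> carrier (BijGroup S) \<Longrightarrow> v \<in> carrier (BijGroup S) \<Longrightarrow> x \<in> S \<Longrightarrow>
   (u \<otimes>\<^bsub>BijGroup S\<^esub> v) x = u (v x)"
  by (simp add: BijGroup_def compose_def)

lemma BijGroup_one_apply: "x \<in> S \<Longrightarrow> \<one>\<^bsub>BijGroup S\<^esub> x = x"
  by (simp add: BijGroup_def)

lemma BijGroup_bij_betw: "u \<in> carrier (BijGroup S) \<Longrightarrow> bij_betw u S S"
  by (simp add: BijGroup_def Bij_def)

lemma BijGroup_apply_mem: "u \<in> carrier (BijGroup S) \<Longrightarrow> x \<in> S \<Longrightarrow> u x \<in> S"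
  using BijGroup_bij_betw bij_betwE by blast

lemma BijGroup_apply_eq_iff:
  "u \<in> carrier (BijGroup S) \<Longrightarrow> x \<in> S \<Longrightarrow> y \<in> S \<Longrightarrow> u x = u y \<longleftrightarrow> x = y"
  using BijGroup_bij_betw bij_betw_imp_inj_on inj_on_eq_iff by fast

lemma BijGroup_apply_inv:
  assumes "u \<in> carrier (BijGroup S)" "x \<in> S"
  shows "u ((inv\<^bsub>BijGroup S\<^esub> u) x) = x" "(inv\<^bsub>BijGroup S\<^esub> u) x \<in> S"
  using assms inv_BijGroup[of u S] BijGroup_bij_betw[OF assms(1)]
  by (auto simp: BijGroup_def bij_betw_def f_inv_into_f inv_into_into)

lemma moved_mult:
  "u \<in> carrier (BijGroup S) \<Longrightarrow> v \<in> carrier (BijGroup S) \<Longrightarrow>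
   moved S (u \<otimes>\<^bsub>BijGroup S\<^esub> v) \<subseteq> moved S u \<union> moved S v"
  unfolding moved_def using BijGroup_mult_apply by fastforce

lemma moved_inv:
  assumes u: "u \<in> carrier (BijGroup S)"
  shows "moved S (inv\<^bsub>BijGroup S\<^esub> u) \<subseteq> moved S u"
proof
  fix x assume x: "x \<in> moved S (inv\<^bsub>BijGroup S\<^esub> u)"
  then have xS: "x \<in> S" and "(inv\<^bsub>BijGroup S\<^esub> u) x \<noteq> x" by (auto simp: moved_def)
  then have "u ((inv\<^bsub>BijGroup S\<^esub> u) x) \<noteq> u x"
    using BijGroup_apply_eq_iff[OF u BijGroup_apply_inv(2)[OF u xS] xS] by simp
  then show "x \<in> moved S u" using xS BijGroup_apply_inv(1)[OF u xS] by (simp add: moved_def)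
qed

lemma moved_generate:
  assumes "Y \<subseteq> carrier (BijGroup S)" "\<And>y. y \<in> Y \<Longrightarrow> moved S y \<subseteq> W" "u \<in> generate (BijGroup S) Y"
  shows "moved S u \<subseteq> W"
  using assms(3)
proof (induction u rule: generate.induct)
  case one
  then show ?case by (auto simp: moved_def BijGroup_one_apply)
next
  case (incl h)
  then show ?case using assms(2) by blast
next
  case (inv h)
  then show ?case using assms moved_inv[of h S] by blast
next
  case (eng h1 h2)
  then show ?case using moved_mult Bij.generate_in_carrier[OF assms(1)] by blast
qed

lemma moved_apply:
  "u \<in> carrier (BijGroup S) \<Longrightarrow> x \<in> moved S u \<Longrightarrow> u x \<in> moved S u"
  by (auto simp: moved_def BijGroup_apply_eq_iff BijGroup_apply_mem)

lemma disjoint_moved_commute: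
  assumes u: "u \<in> carrier (BijGroup S)" and v: "v \<in> carrier (BijGroup S)"
    and disjoint: "moved S u \<inter> moved S v = {}"
  shows "u \<otimes>\<^bsub>BijGroup S\<^esub> v = v \<otimes>\<^bsub>BijGroup S\<^esub> u"
proof (rule extensionalityI)
  show "u \<otimes>\<^bsub>BijGroup S\<^esub> v \<in> extensional S" "v \<otimes>\<^bsub>BijGroup S\<^esub> u \<in> extensional S"
    using u v by (auto simp: BijGroup_def Bij_def)
  fix x assume x: "x \<in> S"
  have "u (v x) = v (u x)"
  proof (cases "x \<in> moved S u")
    case True
    then have "u x \<in> moved S u" by (rule moved_apply[OF u])
    then have "v (u x) = u x" using disjoint BijGroup_apply_mem[OF u x] by (auto simp: moved_def)
    moreover have "v x = x" using True disjoint x by (auto simp: moved_def)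
    ultimately show ?thesis by simp
  next
    case False
    then have ux: "u x = x" using x by (simp add: moved_def)
    show ?thesis
    proof (cases "x \<in> moved S v")
      case True
      then have "v x \<in> moved S v" by (rule moved_apply[OF v])
      then have "u (v x) = v x" using disjoint BijGroup_apply_mem[OF v x] by (auto simp: moved_def)
      then show ?thesis using ux by simp
    next
      case False
      then show ?thesis using ux x by (simp add: moved_def)
    qed
  qed
  then show "(u \<otimes>\<^bsub>BijGroup S\<^esub> v) x = (v \<otimes>\<^bsub>BijGroup S\<^esub> u) x"
    by (simp add: BijGroup_mult_apply u v x)
qed

lemma moved_conjugation:
  assumes w: "w \<in> carrier (BijGroup S)" and u: "u \<in> carrier (BijGroup S)"
  shows "moved S (conjugation (BijGroup S) w u) \<subseteq> w ` moved S u"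
proof
  fix x assume x: "x \<in> moved S (conjugation (BijGroup S) w u)"
  define y where "y = (inv\<^bsub>BijGroup S\<^esub> w) x"
  have y: "y \<in> S" "w y = x" using BijGroup_apply_inv[OF w] x y_def by (auto simp: moved_def)
  have "conjugation (BijGroup S) w u x = (w \<otimes>\<^bsub>BijGroup S\<^esub> u) y"
    using BijGroup_mult_apply[OF Bij.m_closed[OF w u] Bij.inv_closed[OF w]] x y_def
    by (simp add: conjugation_def moved_def)
  also have "\<dots> = w (u y)" using BijGroup_mult_apply[OF w u y(1)] .
  finally have "conjugation (BijGroup S) w u x = w (u y)" .
  then have "y \<in> moved S u" using x y by (auto simp: moved_def)
  then show "x \<in> w ` moved S u" using y by blast
qed

lemma commuting_image_moved:
  assumes w: "w \<in> carrier (BijGroup S)" and g: "g \<in> carrier (BijGroup S)"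
    and commute: "w \<otimes>\<^bsub>BijGroup S\<^esub> g = g \<otimes>\<^bsub>BijGroup S\<^esub> w"
  shows "w ` moved S g \<subseteq> moved S g"
proof
  fix y assume "y \<in> w ` moved S g"
  then obtain x where x: "x \<in> S" "g x \<noteq> x" "y = w x" by (auto simp: moved_def)
  have "g (w x) = w (g x)"
    using BijGroup_mult_apply[OF w g x(1)] BijGroup_mult_apply[OF g w x(1)] commute by simp
  also have "\<dots> \<noteq> w x"
    using x BijGroup_apply_eq_iff[OF w] BijGroup_apply_mem[OF g] by simp
  finally show "y \<in> moved S g"
    using x BijGroup_apply_mem[OF w] by (simp add: moved_def)
qed

definition wandering_domain :: "'a::linorder set \<Rightarrow> ('a \<Rightarrow> 'a) \<Rightarrow> 'a set \<Rightarrow> bool" where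
  "wandering_domain S g W \<longleftrightarrow> W \<subseteq> S \<and> (\<forall>y\<in>W. \<forall>z\<in>S. g y \<le> z \<longrightarrow> z \<notin> W)"

lemma wandering_domain_subset_moved: "wandering_domain S g W \<Longrightarrow> W \<subseteq> moved S g"
  by (force simp: wandering_domain_def moved_def)

lemma BijGroup_pow_apply_ge:
  fixes S :: "'a::linorder set"
  assumes g: "g \<in> carrier (BijGroup S)" and pos: "\<And>x. x \<in> S \<Longrightarrow> x \<le> g x" and x: "x \<in> S"
  shows "x \<le> (g [^]\<^bsub>BijGroup S\<^esub> (n::nat)) x"
  using x
proof (induction n arbitrary: x)
  case 0
  then show ?case by (simp add: BijGroup_one_apply)
next
  case (Suc n)
  have "(g [^]\<^bsub>BijGroup S\<^esub> Suc n) x = (g [^]\<^bsub>BijGroup S\<^esub> n) (g x)"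
    using BijGroup_mult_apply[OF Bij.nat_pow_closed[OF g] g Suc.prems] by simp
  then show ?case
    using Suc.IH[OF BijGroup_apply_mem[OF g Suc.prems]] pos[OF Suc.prems] by simp
qed

lemma wandering_translates_disjoint:
  fixes S :: "'a::linorder set"
  assumes g: "g \<in> carrier (BijGroup S)" and pos: "\<And>x. x \<in> S \<Longrightarrow> x \<le> g x"
    and W: "wandering_domain S g W" and "(n::int) \<noteq> m"
  shows "(g [^]\<^bsub>BijGroup S\<^esub> n) ` W \<inter> (g [^]\<^bsub>BijGroup S\<^esub> m) ` W = {}"
proof -
  have disjoint_Suc: "(g [^]\<^bsub>BijGroup S\<^esub> n) ` W \<inter> (g [^]\<^bsub>BijGroup S\<^esub> (n + int (Suc j))) ` W = {}"
    for n :: int and j :: nat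
  proof (rule ccontr)
    let ?gn = "g [^]\<^bsub>BijGroup S\<^esub> n" and ?gj = "g [^]\<^bsub>BijGroup S\<^esub> Suc j"
    assume "?gn ` W \<inter> (g [^]\<^bsub>BijGroup S\<^esub> (n + int (Suc j))) ` W \<noteq> {}"
    then obtain y y' where y: "y \<in> W" "y' \<in> W"
      and "?gn y = (g [^]\<^bsub>BijGroup S\<^esub> (n + int (Suc j))) y'" by blast
    then have eq: "?gn y = (?gn \<otimes>\<^bsub>BijGroup S\<^esub> ?gj) y'"
      by (simp only: Bij.int_pow_mult[OF g] int_pow_int)
    have S: "y \<in> S" "y' \<in> S" using y W by (auto simp: wandering_domain_def)
    have "?gj y' \<in> S" by (rule BijGroup_apply_mem[OF Bij.nat_pow_closed[OF g] S(2)])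
    note S = S this
    have "?gn y = ?gn (?gj y')"
      using eq BijGroup_mult_apply[of ?gn S ?gj y'] g S(2) by (simp del: Bij.nat_pow_Suc)
    then have "y = ?gj y'"
      using BijGroup_apply_eq_iff[of ?gn S y "?gj y'"] g S by (simp del: Bij.nat_pow_Suc)
    moreover have "g y' \<le> ?gj y'"
      using BijGroup_mult_apply[OF Bij.nat_pow_closed[OF g] g S(2)]
        BijGroup_pow_apply_ge[OF g pos BijGroup_apply_mem[OF g S(2)], of j] by simp
    ultimately show False using W y S by (auto simp: wandering_domain_def)
  qed
  have lt: "(g [^]\<^bsub>BijGroup S\<^esub> n) ` W \<inter> (g [^]\<^bsub>BijGroup S\<^esub> m) ` W = {}" if "n < m" for n m :: int
    using disjoint_Suc that zless_iff_Suc_zadd by auto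
  show ?thesis
    using \<open>n \<noteq> m\<close> lt[of n m] lt[of m n] by (cases "n < m") (auto simp: Int_commute)
qed

lemma exp_of_derived_generate_insert_wandering:
  fixes S :: "'a::linorder set"
  assumes g: "g \<in> carrier (BijGroup S)" and pos: "\<And>x. x \<in> S \<Longrightarrow> x \<le> g x"
    and W: "wandering_domain S g W"
    and Xr: "Xr \<subseteq> carrier (BijGroup S)" "\<And>u. u \<in> Xr \<Longrightarrow> moved S u \<inter> moved S g = {}"
    and Xw: "Xw \<subseteq> carrier (BijGroup S)" "\<And>u. u \<in> Xw \<Longrightarrow> moved S u \<subseteq> W"
    and k: "(derived (BijGroup S) ^^ k) (generate (BijGroup S) (Xr \<union> Xw)) \<subseteq> {\<one>\<^bsub>BijGroup S\<^esub>}"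
  shows "(derived (BijGroup S) ^^ Suc k) (generate (BijGroup S) (insert g (Xr \<union> Xw)))
    \<subseteq> {\<one>\<^bsub>BijGroup S\<^esub>}"
proof -
  let ?B = "BijGroup S"
  let ?c = "\<lambda>n::int. conjugation ?B (g [^]\<^bsub>?B\<^esub> n)"
  define A where "A = generate ?B Xr"
  define B where "B = generate ?B Xw"
  have A: "subgroup A ?B" and B: "subgroup B ?B"
    unfolding A_def B_def using Bij.generate_is_subgroup Xr(1) Xw(1) by auto
  have Ac: "A \<subseteq> carrier ?B" and Bc: "B \<subseteq> carrier ?B" using A B subgroup.subset by auto
  have moved_A: "moved S a \<subseteq> - moved S g" if "a \<in> A" for a
    using moved_generate[OF Xr(1), of "- moved S g"] Xr(2) that unfolding A_def by blast
  have moved_B: "moved S b \<subseteq> W" if "b \<in> B" for b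
    using moved_generate[OF Xw] that unfolding B_def by blast
  have gn: "g [^]\<^bsub>?B\<^esub> n \<in> carrier ?B" for n :: int using g by simp
  have moved_pow: "moved S (g [^]\<^bsub>?B\<^esub> n) \<subseteq> moved S g" for n :: int
  proof (rule moved_generate[of "{g}"])
    show "g [^]\<^bsub>?B\<^esub> n \<in> generate ?B {g}" using Bij.generate_pow[OF g] by blast
  qed (use g in auto)
  have pow_commute: "g [^]\<^bsub>?B\<^esub> n \<otimes>\<^bsub>?B\<^esub> g = g \<otimes>\<^bsub>?B\<^esub> g [^]\<^bsub>?B\<^esub> n" for n :: int
    using Bij.int_pow_mult[OF g, of n 1] Bij.int_pow_mult[OF g, of 1 n] g by (simp add: add.commute)
  have "W \<subseteq> moved S g" by (rule wandering_domain_subset_moved[OF W])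
  then have translate: "(g [^]\<^bsub>?B\<^esub> n) ` W \<subseteq> moved S g" for n :: int
    using commuting_image_moved[OF gn g pow_commute] by blast
  have moved_conj: "moved S (?c n b) \<subseteq> (g [^]\<^bsub>?B\<^esub> n) ` W" if "b \<in> B" for n b
    using moved_conjugation[OF gn subsetD[OF Bc that]] image_mono[OF moved_B[OF that]] by (rule subset_trans)
  have c_closed: "?c n b \<in> carrier ?B" if "b \<in> B" for n b
    using Bij.conjugation_closed[OF gn subsetD[OF Bc that]] .
  have central: "g [^]\<^bsub>?B\<^esub> n \<otimes>\<^bsub>?B\<^esub> a = a \<otimes>\<^bsub>?B\<^esub> g [^]\<^bsub>?B\<^esub> n"
    if "a \<in> A" for a and n :: int
  proof (rule disjoint_moved_commute[OF gn subsetD[OF Ac that]])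
    show "moved S (g [^]\<^bsub>?B\<^esub> n) \<inter> moved S a = {}"
      using moved_pow[of n] moved_A[OF that] by blast
  qed
  have commute_AB: "a \<otimes>\<^bsub>?B\<^esub> ?c n b = ?c n b \<otimes>\<^bsub>?B\<^esub> a" if "a \<in> A" "b \<in> B" for a b n
  proof (rule disjoint_moved_commute[OF subsetD[OF Ac that(1)] c_closed[OF that(2)]])
    show "moved S a \<inter> moved S (?c n b) = {}"
      using moved_A[OF that(1)] moved_conj[OF that(2)] translate[of n] by blast
  qed
  have commute_BB: "?c n b \<otimes>\<^bsub>?B\<^esub> ?c m b' = ?c m b' \<otimes>\<^bsub>?B\<^esub> ?c n b"
    if "n \<noteq> m" "b \<in> B" "b' \<in> B" for b b' n m
  proof (rule disjoint_moved_commute[OF c_closed[OF that(2)] c_closed[OF that(3)]])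
    show "moved S (?c n b) \<inter> moved S (?c m b') = {}"
      using moved_conj[OF that(2)] moved_conj[OF that(3)]
        wandering_translates_disjoint[OF g pos W that(1)] by blast
  qed
  have "A \<subseteq> generate ?B (Xr \<union> Xw)" "B \<subseteq> generate ?B (Xr \<union> Xw)"
    unfolding A_def B_def by (intro Bij.mono_generate; blast)+
  from this[THEN Bij.mono_exp_of_derived, THEN subset_trans, OF k]
  have A_k: "(derived ?B ^^ k) A \<subseteq> {\<one>\<^bsub>?B\<^esub>}" and B_k: "(derived ?B ^^ k) B \<subseteq> {\<one>\<^bsub>?B\<^esub>}" .
  have "Xr \<subseteq> A" "Xw \<subseteq> B"
    unfolding A_def B_def by (rule subsetI, rule generate.incl, assumption)+
  then have "insert g (Xr \<union> Xw) \<subseteq> insert g (A \<union> B)" by blast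
  then have "(derived ?B ^^ Suc k) (generate ?B (insert g (Xr \<union> Xw)))
      \<subseteq> (derived ?B ^^ Suc k) (generate ?B (insert g (A \<union> B)))"
    by (intro Bij.mono_exp_of_derived Bij.mono_generate)
  also have "\<dots> \<subseteq> {\<one>\<^bsub>?B\<^esub>}"
    by (rule Bij.exp_of_derived_generate_insert[OF g A B central commute_AB commute_BB A_k B_k])
  finally show ?thesis .
qed

section \<open>Positive homeomorphisms of the unit interval\<close>

lemma homeo01_bij_betw:
  assumes "homeo01 f" shows "bij_betw f {0..1} {0..1}"
proof -
  obtain g where h: "homeomorphism {0..1} {0..1} f g" using assms by (auto simp: homeo01_def)
  have "inj_on f {0..1}"
    by (rule inj_on_inverseI[of _ g]) (use h in \<open>auto simp: homeomorphism_def\<close>)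
  then show ?thesis using homeomorphism_image1[OF h] by (simp add: bij_betw_def)
qed

lemma homeo01_in_BijGroup: "homeo01 f \<Longrightarrow> restrict f {0..1} \<in> carrier (BijGroup {0..1})"
  using homeo01_bij_betw unfolding BijGroup_def Bij_def by simp

lemma positive_homeo01_fixes_endpoints:
  assumes "homeo01 f" "positive_homeo f"
  shows "f 0 = 0" "f 1 = 1"
proof -
  have img: "f ` {0..1} = {0..1}" using homeo01_bij_betw[OF assms(1)] by (simp add: bij_betw_def)
  have pos: "z \<le> f z" if "z \<in> {0..1}" for z using assms(2) that by (simp add: positive_homeo_def)
  have "0 \<in> f ` {0..1}" using img by simp
  then obtain z where z: "z \<in> {0..1}" "f z = 0" by force
  then have "z = 0" using pos[of z] by simp
  then show "f 0 = 0" using z by simp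
  have "f 1 \<in> {0..1}" using bij_betwE[OF homeo01_bij_betw[OF assms(1)]] by simp
  then show "f 1 = 1" using pos[of 1] by simp
qed

lemma positive_homeo01_strict_mono:
  assumes f: "homeo01 f" "positive_homeo f" and xy: "x \<in> {0..1}" "y \<in> {0..1}" "x < y"
  shows "f x < f y"
proof (rule ccontr)
  have inj: "inj_on f {0..1}" using homeo01_bij_betw[OF f(1)] bij_betw_imp_inj_on by blast
  have cont: "continuous_on {0..x} f"
    using f(1) xy by (auto simp: homeo01_def homeomorphism_def elim: continuous_on_subset)
  assume "\<not> f x < f y"
  moreover have "f x \<noteq> f y" using inj_onD[OF inj] xy by fastforce
  ultimately have "f y < f x" by simp
  moreover have "f 0 \<le> f y"
  proof -
    have "y \<le> f y" using f(2) xy(2) by (simp add: positive_homeo_def)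
    then show ?thesis using positive_homeo01_fixes_endpoints(1)[OF f] xy(2) by simp
  qed
  ultimately obtain z where z: "0 \<le> z" "z \<le> x" "f z = f y"
    using IVT'[of f 0 "f y" x] cont xy by force
  then have "z = y" using inj_onD[OF inj] xy by force
  then show False using z xy by simp
qed

lemma moved_restrict_open:
  assumes "homeo01 f" "positive_homeo f"
  shows "open (moved {0..1} (restrict f {0..1}))"
proof -
  have "moved {0..1} (restrict f {0..1}) = {0<..<1} \<inter> (\<lambda>x. f x - x) -` (- {0})"
    using positive_homeo01_fixes_endpoints[OF assms] by (auto simp: moved_def less_le)
  moreover have "continuous_on {0<..<1} (\<lambda>x. f x - x)"
    using assms(1)
    by (auto simp: homeo01_def homeomorphism_def intro!: continuous_intros elim: continuous_on_subset)
  moreover have "open (- {0::real})" by (simp add: open_Compl)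
  ultimately show ?thesis
    using continuous_open_preimage[of "{0<..<1}" "\<lambda>x. f x - x" "- {0}"] by simp
qed

lemma positive_homeo01_wandering_domain:
  assumes f: "homeo01 f" "positive_homeo f" and x: "x \<in> {0..1}"
  shows "wandering_domain {0..1} (restrict f {0..1}) {x<..<f x}"
proof -
  have fx: "f x \<le> 1" using bij_betwE[OF homeo01_bij_betw[OF f(1)]] x by simp
  show ?thesis
    unfolding wandering_domain_def
  proof (intro conjI ballI impI)
    show "{x<..<f x} \<subseteq> {0..1}" using x fx by auto
    fix y z assume y: "y \<in> {x<..<f x}" and le: "restrict f {0..1} y \<le> z"
    have y01: "y \<in> {0..1}" using y x fx by auto
    then have "f x < f y" using positive_homeo01_strict_mono[OF f x] y by auto
    then show "z \<notin> {x<..<f x}" using le y01 by auto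
  qed
qed

lemma moved_restrict_subset_interior_supp01:
  assumes "homeo01 f" "positive_homeo f"
  shows "moved {0..1} (restrict f {0..1}) \<subseteq> interior (supp01 f)"
proof (rule interior_maximal[OF _ moved_restrict_open[OF assms]])
  show "moved {0..1} (restrict f {0..1}) \<subseteq> supp01 f"
    unfolding supp01_def by (rule order_trans[OF _ closure_subset]) (auto simp: moved_def Fix01_def)
qed

lemma supp01_subset: "supp01 f \<subseteq> {0..1}"
  unfolding supp01_def by (rule closure_minimal) auto

lemma fundamental_domain_subset_supp01:
  assumes f: "homeo01 f" "positive_homeo f" and "fundamental_domain f I"
  shows "I \<subseteq> supp01 f"
proof -
  obtain y where y: "y \<in> interior (supp01 f)" "I = {y..f y}"
    using assms(3) by (auto simp: fundamental_domain_def)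
  have y_supp: "y \<in> supp01 f" using y(1) interior_subset by blast
  show ?thesis
  proof (cases "f y = y")
    case True
    then show ?thesis using y(2) y_supp by simp
  next
    case False
    have y01: "y \<in> {0..1}" using y_supp supp01_subset by blast
    then have lt: "y < f y" using False f(2) by (simp add: positive_homeo_def order.strict_iff_order)
    have "f y \<le> 1" using bij_betwE[OF homeo01_bij_betw[OF f(1)]] y01 by simp
    have "{y<..<f y} \<subseteq> {0..1} - Fix01 f"
    proof
      fix z assume z: "z \<in> {y<..<f y}"
      then have z01: "z \<in> {0..1}" using y01 \<open>f y \<le> 1\<close> by auto
      have "f y < f z" using positive_homeo01_strict_mono[OF f y01 z01] z by auto
      then show "z \<in> {0..1} - Fix01 f" using z z01 by (auto simp: Fix01_def)
    qed
    then have "closure {y<..<f y} \<subseteq> supp01 f" unfolding supp01_def by (rule closure_mono)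
    then show ?thesis using y(2) lt by simp
  qed
qed

section \<open>Fundamental systems\<close>

lemma fundamental_systemD:
  assumes "fundamental_system S" "(f, I) \<in> S"
  shows "homeo01 f" "positive_homeo f" "fundamental_domain f I"
  using assms by (auto simp: fundamental_system_def simple_homeo_def)

lemma fundamental_system_nested:
  assumes "fundamental_system S" "(f, I) \<in> S" "(g, J) \<in> S" "(f, I) \<noteq> (g, J)"
  shows "interior (supp01 f) \<inter> interior (supp01 g) = {} \<or> supp01 f \<subseteq> J \<or> supp01 g \<subseteq> I"
  using assms unfolding fundamental_system_def by fast

lemma fundamental_system_subset: "fundamental_system S \<Longrightarrow> T \<subseteq> S \<Longrightarrow> fundamental_system T"
  unfolding fundamental_system_def case_prod_unfold by blast

lemma fundamental_system_root:
  assumes "finite S" "S \<noteq> {}" "fundamental_system S"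
  obtains g I where "(g, I) \<in> S" "\<And>h J. (h, J) \<in> S \<Longrightarrow> \<not> supp01 g \<subseteq> J"
proof -
  define A where "A = (\<lambda>p. supp01 (fst p)) ` S"
  obtain m where m: "m \<in> A" and max: "\<forall>B\<in>A. m \<subseteq> B \<longrightarrow> m = B"
    using finite_has_maximal[of A] assms(1,2) unfolding A_def by blast
  then obtain g I where gI: "(g, I) \<in> S" "m = supp01 g" unfolding A_def by auto
  have "\<not> supp01 g \<subseteq> J" if hJ: "(h, J) \<in> S" for h J
  proof
    assume gJ: "supp01 g \<subseteq> J"
    note h = fundamental_systemD[OF assms(3) hJ]
    obtain y where y: "y \<in> interior (supp01 h)" "J = {y..h y}"
      using h(3) by (auto simp: fundamental_domain_def)
    have "supp01 g \<subseteq> supp01 h" using gJ fundamental_domain_subset_supp01[OF h] by blast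
    moreover have "supp01 h \<in> A" using hJ unfolding A_def by force
    ultimately have "supp01 h \<subseteq> {y..h y}" using max gI(2) gJ y(2) by force
    then have "interior (supp01 h) \<subseteq> interior {y..h y}" by (rule interior_mono)
    then show False using y(1) by auto
  qed
  then show ?thesis using gI(1) that by blast
qed

lemma fundamental_system_moved_subset:
  assumes "fundamental_system S" "(f, J) \<in> S" "supp01 f \<subseteq> I"
  shows "moved {0..1} (restrict f {0..1}) \<subseteq> interior I"
  using moved_restrict_subset_interior_supp01 fundamental_systemD[OF assms(1,2)]
    interior_mono[OF assms(3)] by blast

lemma fundamental_system_moved_disjoint:
  assumes "fundamental_system S" "(f, J) \<in> S" "(g, I) \<in> S" "(f, J) \<noteq> (g, I)"
    and "\<not> supp01 f \<subseteq> I" "\<not> supp01 g \<subseteq> J"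
  shows "moved {0..1} (restrict f {0..1}) \<inter> moved {0..1} (restrict g {0..1}) = {}"
proof -
  have "interior (supp01 f) \<inter> interior (supp01 g) = {}"
    using fundamental_system_nested[OF assms(1-4)] assms(5,6) by blast
  then show ?thesis
    using moved_restrict_subset_interior_supp01 fundamental_systemD[OF assms(1)] assms(2,3) by blast
qed

definition generators :: "((real \<Rightarrow> real) \<times> real set) set \<Rightarrow> (real \<Rightarrow> real) set" where
  "generators S = (\<lambda>(f, I). restrict f {0..1}) ` S"

lemma generators_in_BijGroup:
  "fundamental_system S \<Longrightarrow> generators S \<subseteq> carrier (BijGroup {0..1})"
  unfolding generators_def using fundamental_systemD(1) homeo01_in_BijGroup by fast

lemma exp_of_derived_generators:
  assumes "finite S" "fundamental_system S"
  shows "(derived (BijGroup {0..1}) ^^ card S) (generate (BijGroup {0..1}) (generators S))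
    \<subseteq> {\<one>\<^bsub>BijGroup {0..1}\<^esub>}"
  using assms
proof (induction S rule: finite_psubset_induct)
  case (psubset S)
  let ?B = "BijGroup {0..1::real}"
  show ?case
  proof (cases "S = {}")
    case True
    then show ?thesis by (simp add: generators_def Bij.generate_empty)
  next
    case False
    obtain g I where gI: "(g, I) \<in> S" and root: "\<And>h J. (h, J) \<in> S \<Longrightarrow> \<not> supp01 g \<subseteq> J"
      using fundamental_system_root[OF psubset.hyps(1) False psubset.prems] by blast
    note g = fundamental_systemD[OF psubset.prems gI]
    obtain x where x: "x \<in> interior (supp01 g)" "I = {x..g x}"
      using g(3) by (auto simp: fundamental_domain_def)
    let ?\<gamma> = "restrict g {0..1}"
    define T where "T = S - {(g, I)}"
    define Tr where "Tr = {p \<in> T. \<not> supp01 (fst p) \<subseteq> I}"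
    define Tw where "Tw = {p \<in> T. supp01 (fst p) \<subseteq> I}"
    have T: "T \<subset> S" "fundamental_system T"
      using gI fundamental_system_subset[OF psubset.prems] unfolding T_def by auto
    have "(derived ?B ^^ Suc (card T)) (generate ?B (insert ?\<gamma> (generators Tr \<union> generators Tw)))
      \<subseteq> {\<one>\<^bsub>?B\<^esub>}"
    proof (rule exp_of_derived_generate_insert_wandering)
      show "?\<gamma> \<in> carrier ?B" using homeo01_in_BijGroup[OF g(1)] .
      show "y \<le> ?\<gamma> y" if "y \<in> {0..1}" for y using g(2) that by (simp add: positive_homeo_def)
      have "x \<in> {0..1}" using x(1) interior_subset supp01_subset by blast
      then show "wandering_domain {0..1} ?\<gamma> {x<..<g x}"
        using positive_homeo01_wandering_domain[OF g(1,2)] by simp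
      show "generators Tr \<subseteq> carrier ?B" "generators Tw \<subseteq> carrier ?B"
        using generators_in_BijGroup[OF T(2)] unfolding generators_def Tr_def Tw_def by auto
      have "generators Tr \<union> generators Tw = generators T"
        unfolding generators_def Tr_def Tw_def by auto
      then show "(derived ?B ^^ card T) (generate ?B (generators Tr \<union> generators Tw)) \<subseteq> {\<one>\<^bsub>?B\<^esub>}"
        using psubset.IH[OF T] by simp
      show "moved {0..1} u \<subseteq> {x<..<g x}" if u: "u \<in> generators Tw" for u
      proof -
        obtain f J where fJ: "(f, J) \<in> Tw" "u = restrict f {0..1}"
          using u unfolding generators_def by auto
        then show ?thesis
          using fundamental_system_moved_subset[OF psubset.prems, of f J I] x(2)
          unfolding Tw_def T_def by simp
      qed
      show "moved {0..1} u \<inter> moved {0..1} ?\<gamma> = {}" if u: "u \<in> generators Tr" for u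
      proof -
        obtain f J where fJ: "(f, J) \<in> Tr" "u = restrict f {0..1}"
          using u unfolding generators_def by auto
        then have f: "(f, J) \<in> S" "(f, J) \<noteq> (g, I)" "\<not> supp01 f \<subseteq> I"
          unfolding Tr_def T_def by auto
        show ?thesis
          using fundamental_system_moved_disjoint[OF psubset.prems f(1) gI f(2,3) root[OF f(1)]] fJ(2)
          by simp
      qed
    qed
    moreover have "generators S = insert ?\<gamma> (generators Tr \<union> generators Tw)"
      using gI unfolding generators_def T_def Tr_def Tw_def by auto
    moreover have "card S = Suc (card T)"
      using card_Suc_Diff1[OF psubset.hyps(1) gI] unfolding T_def by simp
    ultimately show ?thesis by simp
  qed
qed

theorem propositionp:
  fixes \<S> :: "((real \<Rightarrow> real) \<times> real set) set"
  assumes "finite \<S>" and "fundamental_system \<S>"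
  shows "solvable (elementary_group \<S>) \<and>
         (\<exists>k \<le> card \<S>. (derived (elementary_group \<S>) ^^ k) (carrier (elementary_group \<S>))
                          = {\<one>\<^bsub>elementary_group \<S>\<^esub>})"
proof -
  let ?B = "BijGroup {0..1::real}" and ?G = "generate (BijGroup {0..1::real}) (generators \<S>)"
  have E: "elementary_group \<S> = ?B\<lparr>carrier := ?G\<rparr>"
    by (simp add: elementary_group_def generators_def)
  have G: "subgroup ?G ?B"
    using Bij.generate_is_subgroup[OF generators_in_BijGroup[OF assms(2)]] .
  have "(derived ?B ^^ card \<S>) ?G = {\<one>\<^bsub>?B\<^esub>}"
    using exp_of_derived_generators[OF assms] subgroup.one_closed[OF Bij.exp_of_derived_is_subgroup[OF G]]
    by blast
  then have "(derived (elementary_group \<S>) ^^ card \<S>) (carrier (elementary_group \<S>))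
      = {\<one>\<^bsub>elementary_group \<S>\<^esub>}"
    using Bij.exp_of_derived_consistent[OF G] by (simp add: E)
  moreover have "group (elementary_group \<S>)"
    using Bij.subgroup_imp_group[OF G] by (simp add: E)
  ultimately show ?thesis using group.solvable_iff_trivial_derived_seq by blast
qed

end
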